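(* Let $S\subset\mathbb R^2$ be nonempty and compact, and closed under $(x,y)\mapsto(\pm x,\pm y)$ for all four sign choices. Suppose $\hat{\mathbf a}=(\hat x_1,\hat y_1)\in S$ and $\hat{\mathbf b}=(\hat x_2,\hat y_2)\in S$ form an optimal pure strategy pair (saddle point) of the game on $S$ with payoff $K$, i.e. $K(\hat{\mathbf a},\mathbf b)\le K(\hat{\mathbf a},\hat{\mathbf b})\le K(\mathbf a,\hat{\mathbf b})$ for all $\mathbf a,\mathbf b\in S$. Then $\hat x_2\ge 0$, $\hat y_2\ge 0$, $\hat x_1\le 0$ and $\hat y_1\le 0$.
   Context: Standing setup. Fix $\sigma_x,\sigma_y>0$ and $\rho\in(-1,1)$, and let $(\xi,\eta)$ be a bivariate normal random vector with mean $(0,0)$ and covariance matrix $\Sigma=\begin{pmatrix}\sigma_x^2&\rho\sigma_x\sigma_y\\ \rho\sigma_x\sigma_y&\sigma_y^2\end{pmatrix}$. Player I (the minimizer) chooses $\mathbf a=(x_1,y_1)\in\mathbb R^2$ and Player II (the maximizer) chooses $\mathbf b=(x_2,y_2)\in\mathbb R^2$. Let $C_1(\mathbf a,\mathbf b)=\{(x,y):(x_1-x)^2+(y_1-y)^2<(x_2-x)^2+(y_2-y)^2\}$ and $C_2(\mathbf a,\mathbf b)=\{(x,y):(x_1-x)^2+(y_1-y)^2>(x_2-x)^2+(y_2-y)^2\}$. The payoff to Player II (paid by Player I) is $K(\mathbf a,\mathbf b)=x_1+y_1$ if $\mathbf a=\mathbf b$, and $K(\mathbf a,\mathbf b)=(x_1+y_1)\,P((\xi,\eta)\in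 C_1(\mathbf a,\mathbf b))+(x_2+y_2)\,P((\xi,\eta)\in C_2(\mathbf a,\mathbf b))$ if $\mathbf a\neq\mathbf b$. For $\mathbf a=(x,y)$ write $-\mathbf a=(-x,-y)$. *)

theory Defs
  imports "HOL-Probability.Probability"
begin

text \<open>Density of the centred bivariate normal law with standard deviations sx, sy and
correlation r (covariance matrix [[sx^2, r sx sy],[r sx sy, sy^2]]).\<close>
definition bvn_density :: "real \<Rightarrow> real \<Rightarrow> real \<Rightarrow> real \<times> real \<Rightarrow> real" where
  "bvn_density sx sy r p =
     (let x = fst p; y = snd p in
      exp (- (x\<^sup>2 / sx\<^sup>2 - 2 * r * x * y / (sx * sy) + y\<^sup>2 / sy\<^sup>2) / (2 * (1 - r\<^sup>2)))
      / (2 * pi * sx * sy * sqrt (1 - r\<^sup>2)))"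

definition bvn :: "real \<Rightarrow> real \<Rightarrow> real \<Rightarrow> (real \<times> real) measure" where
  "bvn sx sy r = density lborel (\<lambda>p. ennreal (bvn_density sx sy r p))"

definition C1 :: "real \<times> real \<Rightarrow> real \<times> real \<Rightarrow> (real \<times> real) set" where
  "C1 a b = {p. (fst a - fst p)\<^sup>2 + (snd a - snd p)\<^sup>2 < (fst b - fst p)\<^sup>2 + (snd b - snd p)\<^sup>2}"

definition C2 :: "real \<times> real \<Rightarrow> real \<times> real \<Rightarrow> (real \<times> real) set" where
  "C2 a b = {p. (fst a - fst p)\<^sup>2 + (snd a - snd p)\<^sup>2 > (fst b - fst p)\<^sup>2 + (snd b - snd p)\<^sup>2}"

text \<open>Payoff to Player II (the maximizer), paid by Player I (the minimizer).\<close>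
definition K :: "real \<Rightarrow> real \<Rightarrow> real \<Rightarrow> real \<times> real \<Rightarrow> real \<times> real \<Rightarrow> real" where
  "K sx sy r a b =
     (if a = b then fst a + snd a
      else (fst a + snd a) * measure (bvn sx sy r) (C1 a b)
         + (fst b + snd b) * measure (bvn sx sy r) (C2 a b))"

end

theory Submission
  imports Defs
begin

text \<open>The normal law is symmetric under \<open>p \<mapsto> -p\<close> and charges every nonempty open set.
  Hence if \<open>a\<close> and \<open>b\<close> are equidistant from the origin, the bisector of \<open>a\<close> and \<open>b\<close> passes
  through the origin, both Voronoi cells have the same positive mass, and
  \<open>K a b = (a\<^sub>1 + a\<^sub>2 + b\<^sub>1 + b\<^sub>2) \<cdot> m\<close> with \<open>m > 0\<close>.  Playing \<open>-a\<close> against \<open>a\<close> therefore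
  gives payoff 0, so the value of the game is 0; and answering a saddle point strategy
  by its mirror image in a coordinate axis gives a payoff that is a positive multiple of
  one coordinate, which forces the signs.\<close>

lemma borel_measurable_bvn_density [measurable]: "bvn_density sx sy r \<in> borel_measurable borel"
  unfolding bvn_density_def Let_def divide_inverse
  by (intro borel_measurable_continuous_onI continuous_intros)

lemma bvn_density_uminus: "bvn_density sx sy r (-p) = bvn_density sx sy r p"
  by (simp add: bvn_density_def Let_def)

lemma emeasure_bvn: "A \<in> sets borel \<Longrightarrow>
    emeasure (bvn sx sy r) A = (\<integral>\<^sup>+ p. ennreal (bvn_density sx sy r p) * indicator A p \<partial>lborel)"
  unfolding bvn_def by (simp add: emeasure_density)

lemma lborel_distr_uminus: "distr lborel borel uminus = (lborel :: (real \<times> real) measure)"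
proof -
  have "(\<lambda>x::real \<times> real. 0 + (-1::real) *\<^sub>R x) = uminus" by auto
  then show ?thesis using lborel_affine[of "-1::real" "0::real \<times> real"] by (simp add: density_1)
qed

lemma emeasure_bvn_vimage_uminus:
  assumes [measurable]: "A \<in> sets borel"
  shows "emeasure (bvn sx sy r) (uminus -` A) = emeasure (bvn sx sy r) A"
proof -
  have [measurable]: "uminus -` A \<in> sets borel"
    unfolding vimage_def by measurable
  have "emeasure (bvn sx sy r) (uminus -` A)
      = (\<integral>\<^sup>+ p. (\<lambda>q. ennreal (bvn_density sx sy r q) * indicator A q) (-p) \<partial>lborel)"
    by (subst emeasure_bvn) (auto simp: bvn_density_uminus indicator_def)
  also have "\<dots> = (\<integral>\<^sup>+ q. ennreal (bvn_density sx sy r q) * indicator A q \<partial>distr lborel borel uminus)"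
    by (subst nn_integral_distr) auto
  also have "\<dots> = emeasure (bvn sx sy r) A"
    by (simp add: lborel_distr_uminus emeasure_bvn)
  finally show ?thesis .
qed

lemma correlated_quadratic_form_ge:
  fixes X Y r :: real
  assumes "r\<^sup>2 < 1"
  shows "(X\<^sup>2 + Y\<^sup>2) / 4 \<le> (X\<^sup>2 - 2 * r * X * Y + Y\<^sup>2) / (2 * (1 - r\<^sup>2))"
proof -
  have "(r * X - Y)\<^sup>2 + (X - r * Y)\<^sup>2 \<ge> 0" by simp
  then have "(1 - r\<^sup>2) * (X\<^sup>2 + Y\<^sup>2) \<le> 2 * (X\<^sup>2 - 2 * r * X * Y + Y\<^sup>2)"
    by (simp add: power2_eq_square algebra_simps)
  then show ?thesis using assms by (simp add: field_simps)
qed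

context
  fixes sx sy r :: real
  assumes sx: "sx > 0" and sy: "sy > 0" and r: "r\<^sup>2 < 1"
begin

lemma bvn_density_pos: "bvn_density sx sy r p > 0"
  using sx sy r by (simp add: bvn_density_def Let_def)

lemma bvn_density_le_normal_product:
  "bvn_density sx sy r (x, y)
     \<le> 2 / sqrt (1 - r\<^sup>2) * (normal_density 0 (sqrt 2 * sx) x * normal_density 0 (sqrt 2 * sy) y)"
proof -
  define X where "X = x / sx"
  define Y where "Y = y / sy"
  have Q: "x\<^sup>2 / sx\<^sup>2 - 2 * r * x * y / (sx * sy) + y\<^sup>2 / sy\<^sup>2 = X\<^sup>2 - 2 * r * X * Y + Y\<^sup>2"
    by (simp add: X_def Y_def power_divide)
  have E: "x\<^sup>2 / (4 * sx\<^sup>2) + y\<^sup>2 / (4 * sy\<^sup>2) = (X\<^sup>2 + Y\<^sup>2) / 4"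
    by (simp add: X_def Y_def power_divide field_simps)
  have "sqrt (2 * pi * (sqrt 2 * s)\<^sup>2) = 2 * s * sqrt pi" if "s > 0" for s
    using that by (simp add: power_mult_distrib real_sqrt_mult)
  then have "normal_density 0 (sqrt 2 * sx) x * normal_density 0 (sqrt 2 * sy) y
      = exp (- ((X\<^sup>2 + Y\<^sup>2) / 4)) / (4 * pi * sx * sy)"
    unfolding normal_density_def E[symmetric] using sx sy
    by (simp add: power_mult_distrib exp_add[symmetric] field_simps)
  moreover have "- (X\<^sup>2 - 2 * r * X * Y + Y\<^sup>2) / (2 * (1 - r\<^sup>2)) \<le> - ((X\<^sup>2 + Y\<^sup>2) / 4)"
    unfolding minus_divide_left[symmetric]
    using correlated_quadratic_form_ge[OF r, of X Y] by linarith
  then have "exp (- (X\<^sup>2 - 2 * r * X * Y + Y\<^sup>2) / (2 * (1 - r\<^sup>2))) \<le> exp (- ((X\<^sup>2 + Y\<^sup>2) / 4))"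
    by simp
  moreover have "sqrt (1 - r\<^sup>2) > 0" using r by simp
  ultimately show ?thesis
    unfolding bvn_density_def Let_def fst_conv snd_conv Q using sx sy by (simp add: field_simps)
qed

lemma finite_measure_bvn: "finite_measure (bvn sx sy r)"
proof -
  define n1 where "n1 = normal_density 0 (sqrt 2 * sx)"
  define n2 where "n2 = normal_density 0 (sqrt 2 * sy)"
  define c where "c = 2 / sqrt (1 - r\<^sup>2)"
  have [measurable]: "n1 \<in> borel_measurable borel" "n2 \<in> borel_measurable borel"
    unfolding n1_def n2_def by auto
  have n1_int: "(\<integral>\<^sup>+ x. ennreal (n1 x) \<partial>lborel) = 1" and n2_int: "(\<integral>\<^sup>+ y. ennreal (n2 y) \<partial>lborel) = 1"
    unfolding n1_def n2_def using sx sy by (subst nn_integral_eq_integral; simp)+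
  have "emeasure (bvn sx sy r) UNIV = (\<integral>\<^sup>+ p. ennreal (bvn_density sx sy r p) \<partial>lborel)"
    by (simp add: emeasure_bvn)
  also have "\<dots> \<le> (\<integral>\<^sup>+ p. ennreal c * (ennreal (n1 (fst p)) * ennreal (n2 (snd p))) \<partial>lborel)"
  proof (rule nn_integral_mono)
    fix p :: "real \<times> real"
    have "bvn_density sx sy r p \<le> c * (n1 (fst p) * n2 (snd p))"
      using bvn_density_le_normal_product[of "fst p" "snd p"] by (simp add: c_def n1_def n2_def)
    moreover have "c \<ge> 0" "n1 (fst p) \<ge> 0" "n2 (snd p) \<ge> 0"
      unfolding c_def n1_def n2_def using sx sy r by auto
    ultimately show "ennreal (bvn_density sx sy r p) \<le> ennreal c * (ennreal (n1 (fst p)) * ennreal (n2 (snd p)))"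
      by (simp add: ennreal_mult[symmetric] ennreal_leI)
  qed
  also have "\<dots> = ennreal c * (\<integral>\<^sup>+ p. ennreal (n1 (fst p)) * ennreal (n2 (snd p)) \<partial>lborel)"
    by (rule nn_integral_cmult) (simp add: borel_prod[symmetric])
  also have "\<dots> = ennreal c * (\<integral>\<^sup>+ x. \<integral>\<^sup>+ y. ennreal (n1 x) * ennreal (n2 y) \<partial>lborel \<partial>lborel)"
    by (subst lborel_prod[symmetric], subst lborel.nn_integral_fst[symmetric]) auto
  also have "\<dots> = ennreal c"
    by (simp add: nn_integral_cmult n1_int n2_int)
  finally show ?thesis
    by (intro finite_measureI) (auto simp: bvn_def top_unique)
qed

lemma measure_bvn_open_pos:
  assumes "open A" "A \<noteq> {}"
  shows "measure (bvn sx sy r) A > 0"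
proof -
  have [measurable]: "A \<in> sets borel" using assms(1) by simp
  have "emeasure (bvn sx sy r) A \<noteq> 0"
  proof
    assume "emeasure (bvn sx sy r) A = 0"
    then have "AE p in lborel. ennreal (bvn_density sx sy r p) * indicator A p = 0"
      by (simp add: emeasure_bvn nn_integral_0_iff_AE)
    then have "AE p in lborel. p \<notin> A"
      by (elim eventually_mono) (use bvn_density_pos in \<open>auto simp: indicator_def ennreal_eq_0_iff not_le[symmetric]\<close>)
    then have "A \<in> null_sets lborel" by (simp add: AE_iff_null_sets)
    then have "negligible A" by (simp add: negligible_iff_null_sets null_sets_completionI)
    with open_not_negligible assms show False by blast
  qed
  then show ?thesis
    using finite_measure.emeasure_finite[OF finite_measure_bvn]
    by (simp add: measure_def enn2real_positive_iff less_top zero_less_iff_neq_zero)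
qed

end

lemma open_C1: "open (C1 a b)"
  unfolding C1_def by (intro open_Collect_less continuous_intros)

lemma C1_borel [measurable]: "C1 a b \<in> sets borel"
  using open_C1 by simp

lemma self_in_C1: "a \<noteq> b \<Longrightarrow> a \<in> C1 a b"
  by (cases a, cases b) (auto simp: C1_def prod_eq_iff sum_power2_gt_zero_iff)

text \<open>Equidistance from the origin puts the origin on the perpendicular bisector of \<open>a\<close> and \<open>b\<close>.\<close>
lemma C2_eq_vimage_uminus_C1:
  assumes "(fst a)\<^sup>2 + (snd a)\<^sup>2 = (fst b)\<^sup>2 + (snd b)\<^sup>2"
  shows "C2 a b = uminus -` C1 a b"
  using assms by (auto simp: C1_def C2_def power2_eq_square algebra_simps)

lemma K_equidistant:
  assumes "sx > 0" "sy > 0" "r\<^sup>2 < 1"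
    and "(fst a)\<^sup>2 + (snd a)\<^sup>2 = (fst b)\<^sup>2 + (snd b)\<^sup>2"
  shows "\<exists>m>0. K sx sy r a b = (fst a + snd a + fst b + snd b) * m"
proof (cases "a = b")
  case True
  then show ?thesis by (intro exI[of _ "1/2"]) (simp add: K_def)
next
  case False
  let ?m = "measure (bvn sx sy r) (C1 a b)"
  have "measure (bvn sx sy r) (C2 a b) = ?m"
    by (simp add: measure_def C2_eq_vimage_uminus_C1[OF assms(4)] emeasure_bvn_vimage_uminus)
  then have "K sx sy r a b = (fst a + snd a + fst b + snd b) * ?m"
    using False by (simp add: K_def algebra_simps)
  moreover have "?m > 0"
    using measure_bvn_open_pos[OF assms(1-3) open_C1] self_in_C1[OF False] by blast
  ultimately show ?thesis by blast
qed

theorem mainTheorem6: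
  fixes sx sy r :: real and S :: "(real \<times> real) set"
    and x1 y1 x2 y2 :: real
  assumes "sx > 0" and "sy > 0" and "-1 < r" and "r < 1"
    and "S \<noteq> {}" and "compact S"
    and "\<And>x y. (x, y) \<in> S \<Longrightarrow> (-x, y) \<in> S \<and> (x, -y) \<in> S \<and> (-x, -y) \<in> S"
    and "(x1, y1) \<in> S" and "(x2, y2) \<in> S"
    and "\<And>a b. a \<in> S \<Longrightarrow> b \<in> S \<Longrightarrow>
           K sx sy r (x1, y1) b \<le> K sx sy r (x1, y1) (x2, y2) \<and>
           K sx sy r (x1, y1) (x2, y2) \<le> K sx sy r a (x2, y2)"
  shows "x2 \<ge> 0 \<and> y2 \<ge> 0 \<and> x1 \<le> 0 \<and> y1 \<le> 0"
proof -
  have params: "sx > 0" "sy > 0" "r\<^sup>2 < 1"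
    using assms(1-4) by (auto simp: abs_square_less_1)
  note K_equidistant = K_equidistant[OF params]
  note mirror1 = assms(7)[OF assms(8)] and mirror2 = assms(7)[OF assms(9)]
  let ?v = "K sx sy r (x1, y1) (x2, y2)"
  have upper: "K sx sy r (x1, y1) b \<le> ?v" if "b \<in> S" for b
    using assms(10)[OF assms(8) that] by simp
  have lower: "?v \<le> K sx sy r a (x2, y2)" if "a \<in> S" for a
    using assms(10)[OF that assms(9)] by simp
  have "0 \<le> ?v"
    using upper[of "(-x1, -y1)"] K_equidistant[of "(x1, y1)" "(-x1, -y1)"] mirror1 by force
  moreover have "?v \<le> 0"
    using lower[of "(-x2, -y2)"] K_equidistant[of "(-x2, -y2)" "(x2, y2)"] mirror2 by force
  moreover obtain m1 m2 m3 m4 :: real where "m1 > 0" "m2 > 0" "m3 > 0" "m4 > 0"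
    and "K sx sy r (x2, -y2) (x2, y2) = 2 * x2 * m1" "K sx sy r (-x2, y2) (x2, y2) = 2 * y2 * m2"
    and "K sx sy r (x1, y1) (x1, -y1) = 2 * x1 * m3" "K sx sy r (x1, y1) (-x1, y1) = 2 * y1 * m4"
    using K_equidistant[of "(x2, -y2)" "(x2, y2)"] K_equidistant[of "(-x2, y2)" "(x2, y2)"]
      K_equidistant[of "(x1, y1)" "(x1, -y1)"] K_equidistant[of "(x1, y1)" "(-x1, y1)"]
    by (auto simp: algebra_simps)
  ultimately show ?thesis
    using lower[of "(x2, -y2)"] lower[of "(-x2, y2)"] upper[of "(x1, -y1)"] upper[of "(-x1, y1)"] mirror1 mirror2
    by (auto simp: zero_le_mult_iff mult_le_0_iff)
qed

end
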